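(* Let $H\in(0,1/2)$, $\lambda,\theta>0$, and define for $\tau\ge0$ $$R_Y(\tau)=\theta^2\Big(\frac{\Gamma(2H+1)\cosh(\lambda\tau)}{2\lambda^{2H}}-H\int_0^\tau\cosh(\lambda(\tau-u))\,u^{2H-1}\,\mathsf{d}u\Big).$$ Then $R_Y\in\mathcal{C}^\infty((0,\infty);\mathbb{R})$ and $$R_Y(\tau)=R_Y(0)-\frac{\theta^2}{2}\tau^{2H}+o(\tau^{2H}),\qquad\tau\to0.$$
   Context: $R_Y$ is the covariance function of the stationary fractional Ornstein–Uhlenbeck process $Y_t=\mu+\theta e^{-\lambda t}\int_{-\infty}^te^{\lambda s}\,\mathsf{d}B_s$ driven by a fractional Brownian motion $B$ with Hurst parameter $H$, i.e. $\mathbf{E}(Y_s-\mu)(Y_t-\mu)=R_Y(|t-s|)$. *)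

theory Defs
  imports "HOL-Analysis.Analysis" "HOL-Library.Landau_Symbols"
begin

definition R_Y :: "real \<Rightarrow> real \<Rightarrow> real \<Rightarrow> real \<Rightarrow> real" where
  "R_Y H lam \<theta> \<tau> = \<theta>\<^sup>2 * (Gamma (2*H + 1) * cosh (lam * \<tau>) / (2 * lam powr (2*H))
      - H * integral {0..\<tau>} (\<lambda>u. cosh (lam * (\<tau> - u)) * u powr (2*H - 1)))"

definition smooth_on :: "real set \<Rightarrow> (real \<Rightarrow> real) \<Rightarrow> bool" where
  "smooth_on S f \<longleftrightarrow> (\<forall>n. \<forall>x\<in>S. ((deriv ^^ n) f) field_differentiable (at x))"

end

theory Submission
  imports Defs "HOL-Real_Asymp.Real_Asymp"
begin

text \<open>
  By the addition formula for \<open>cosh (\<lambda>(\<tau> - u))\<close>, \<open>R_Y\<close> is a linear combination of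
  \<open>cosh (\<lambda>\<tau>)\<close> and \<open>cosh (\<lambda>\<tau>) A(\<tau>) - sinh (\<lambda>\<tau>) B(\<tau>)\<close>, where \<open>A, B\<close> are the primitives of
  \<open>cosh (\<lambda>u) u^(2H-1)\<close> and \<open>sinh (\<lambda>u) u^(2H-1)\<close>. The combinations of \<open>cosh (\<lambda>\<tau>), sinh (\<lambda>\<tau>)\<close>
  and those of \<open>cosh (\<lambda>\<tau>) A - sinh (\<lambda>\<tau>) B, sinh (\<lambda>\<tau>) A - cosh (\<lambda>\<tau>) B\<close> are closed under
  differentiation, the latter up to a multiple of \<open>\<tau>^(2H-1)\<close>; this gives smoothness on
  \<open>(0, \<infinity>)\<close> by induction on the order.

  For the expansion at 0, put \<open>K = \<Gamma>(2H+1) / (2 \<lambda>^(2H))\<close>, so that \<open>R_Y(0) = \<theta>\<^sup>2 K\<close>. Since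
  \<open>H \<integral>\<^sub>0\<^sup>\<tau> u^(2H-1) du = \<tau>^(2H)/2\<close>, the remainder \<open>R_Y(\<tau>) - R_Y(0) + \<theta>\<^sup>2 \<tau>^(2H)/2\<close> equals
  \<open>\<theta>\<^sup>2 (K (cosh (\<lambda>\<tau>) - 1) - H \<integral>\<^sub>0\<^sup>\<tau> (cosh (\<lambda>(\<tau> - u)) - 1) u^(2H-1) du)\<close>, and both terms
  are \<open>O(cosh (\<lambda>\<tau>) - 1) = O(\<tau>\<^sup>2) = o(\<tau>^(2H))\<close>.
\<close>

definition smooth_upto :: "nat \<Rightarrow> real set \<Rightarrow> (real \<Rightarrow> real) \<Rightarrow> bool" where
  "smooth_upto k S f \<longleftrightarrow> (\<forall>m\<le>k. \<forall>x\<in>S. (deriv ^^ m) f field_differentiable (at x))"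

lemma smooth_onI_smooth_upto:
  assumes "\<And>k. smooth_upto k S f"
  shows "smooth_on S f"
  using assms unfolding smooth_upto_def smooth_on_def by blast

lemma higher_deriv_cong_on_open:
  assumes "open S" "\<And>x. x \<in> S \<Longrightarrow> f x = g x" "x \<in> S"
  shows "(deriv ^^ n) f x = (deriv ^^ n) g x"
proof (rule higher_deriv_cong_ev[OF _ refl])
  show "\<forall>\<^sub>F y in nhds x. f y = g y"
    using eventually_nhds_in_open[OF assms(1,3)] by (rule eventually_mono) (use assms(2) in auto)
qed

lemma field_differentiable_transform_open:
  assumes "open S" "\<And>x. x \<in> S \<Longrightarrow> f x = g x" "x \<in> S" "g field_differentiable (at x)"
  shows "f field_differentiable (at x)"
proof -
  obtain D where "(g has_field_derivative D) (at x)"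
    using assms(4) unfolding field_differentiable_def by blast
  hence "(f has_field_derivative D) (at x)"
    by (rule has_field_derivative_transform_within_open[OF _ assms(1,3)]) (use assms(2) in auto)
  thus ?thesis unfolding field_differentiable_def by blast
qed

lemma smooth_upto_cong:
  assumes "open S" "\<And>x. x \<in> S \<Longrightarrow> f x = g x" "smooth_upto k S g"
  shows "smooth_upto k S f"
  unfolding smooth_upto_def
proof (intro allI impI ballI)
  fix m x assume "m \<le> k" "x \<in> S"
  then have "(deriv ^^ m) g field_differentiable at x"
    using assms(3) unfolding smooth_upto_def by blast
  moreover have "(deriv ^^ m) f y = (deriv ^^ m) g y" if "y \<in> S" for y
    using higher_deriv_cong_on_open[OF assms(1,2) that] .
  ultimately show "(deriv ^^ m) f field_differentiable at x"
    using field_differentiable_transform_open[OF assms(1)] \<open>x \<in> S\<close> by blast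
qed

lemma higher_deriv_add_on_open:
  assumes "open S" "smooth_upto k S f" "smooth_upto k S g" "m \<le> Suc k" "x \<in> S"
  shows "(deriv ^^ m) (\<lambda>x. f x + g x) x = (deriv ^^ m) f x + (deriv ^^ m) g x"
  using assms(4,5)
proof (induction m arbitrary: x)
  case 0
  then show ?case by simp
next
  case (Suc m)
  have "\<forall>\<^sub>F y in nhds x. (deriv ^^ m) (\<lambda>x. f x + g x) y = (deriv ^^ m) f y + (deriv ^^ m) g y"
    using eventually_nhds_in_open[OF assms(1) Suc.prems(2)]
    by (rule eventually_mono) (use Suc.IH Suc.prems(1) in auto)
  then have "(deriv ^^ Suc m) (\<lambda>x. f x + g x) x = deriv (\<lambda>y. (deriv ^^ m) f y + (deriv ^^ m) g y) x"
    by (simp add: deriv_cong_ev)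
  also have "\<dots> = (deriv ^^ Suc m) f x + (deriv ^^ Suc m) g x"
    using assms(2,3) Suc.prems unfolding smooth_upto_def by (simp add: deriv_add)
  finally show ?case .
qed

lemma smooth_upto_add:
  assumes "open S" "smooth_upto k S f" "smooth_upto k S g"
  shows "smooth_upto k S (\<lambda>x. f x + g x)"
  unfolding smooth_upto_def
proof (intro allI impI ballI)
  fix m x assume "m \<le> k" "x \<in> S"
  have "(\<lambda>y. (deriv ^^ m) f y + (deriv ^^ m) g y) field_differentiable at x"
    using assms(2,3) \<open>m \<le> k\<close> \<open>x \<in> S\<close> unfolding smooth_upto_def by (auto intro!: field_differentiable_add)
  then show "(deriv ^^ m) (\<lambda>x. f x + g x) field_differentiable at x"
    using field_differentiable_transform_open[OF assms(1) higher_deriv_add_on_open[OF assms] \<open>x \<in> S\<close>]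
      \<open>m \<le> k\<close> by simp
qed

lemma smooth_upto_0I:
  assumes "\<And>x. x \<in> S \<Longrightarrow> (f has_field_derivative f' x) (at x)"
  shows "smooth_upto 0 S f"
  using assms unfolding smooth_upto_def field_differentiable_def by auto

lemma smooth_upto_SucI:
  assumes "open S" "\<And>x. x \<in> S \<Longrightarrow> (f has_field_derivative f' x) (at x)" "smooth_upto k S f'"
  shows "smooth_upto (Suc k) S f"
  unfolding smooth_upto_def
proof (intro allI impI ballI)
  fix m x assume m: "m \<le> Suc k" and x: "x \<in> S"
  show "(deriv ^^ m) f field_differentiable at x"
  proof (cases m)
    case 0
    then show ?thesis using assms(2) x by (auto simp: field_differentiable_def)
  next
    case (Suc m')
    have "smooth_upto k S (deriv f)"
      by (rule smooth_upto_cong[OF assms(1) _ assms(3)]) (use assms(2) DERIV_imp_deriv in blast)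
    then show ?thesis
      using m x Suc unfolding smooth_upto_def by (simp add: funpow_Suc_right del: funpow.simps)
  qed
qed

lemma smooth_upto_powr: "smooth_upto k {0<..} (\<lambda>x. c * x powr a)"
proof (induction k arbitrary: c a)
  have deriv: "((\<lambda>x. c * x powr a) has_field_derivative (c * a) * x powr (a - 1)) (at x)"
    if "x \<in> {0<..}" for x c a :: real
    using that by (auto intro!: derivative_eq_intros)
  case 0 show ?case by (rule smooth_upto_0I[OF deriv])
  case (Suc k) show ?case by (rule smooth_upto_SucI[OF _ deriv Suc.IH]) simp
qed

lemma smooth_upto_cosh_sinh:
  assumes "open S"
  shows "smooth_upto k S (\<lambda>x. \<alpha> * cosh (l * x) + \<beta> * sinh (l * x))"
proof (induction k arbitrary: \<alpha> \<beta>)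
  have deriv: "((\<lambda>x. \<alpha> * cosh (l * x) + \<beta> * sinh (l * x)) has_field_derivative
                 (\<beta> * l) * cosh (l * x) + (\<alpha> * l) * sinh (l * x)) (at x)" for x \<alpha> \<beta> :: real
    by (auto intro!: derivative_eq_intros simp: algebra_simps)
  case 0 show ?case by (rule smooth_upto_0I[OF deriv])
  case (Suc k) show ?case by (rule smooth_upto_SucI[OF assms deriv Suc.IH])
qed

lemma smooth_upto_cosh_sinh_primitives:
  fixes A B :: "real \<Rightarrow> real"
  assumes dA: "\<And>x. x > 0 \<Longrightarrow> (A has_real_derivative cosh (l * x) * x powr a) (at x)"
      and dB: "\<And>x. x > 0 \<Longrightarrow> (B has_real_derivative sinh (l * x) * x powr a) (at x)"
  shows "smooth_upto k {0<..} (\<lambda>x. \<alpha> * (cosh (l * x) * A x - sinh (l * x) * B x)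
                                    + \<beta> * (sinh (l * x) * A x - cosh (l * x) * B x))"
proof -
  define U where "U x = cosh (l * x) * A x - sinh (l * x) * B x" for x
  define V where "V x = sinh (l * x) * A x - cosh (l * x) * B x" for x
  have dU: "(U has_real_derivative l * V x + x powr a) (at x)" if "x > 0" for x
  proof -
    have "(U has_real_derivative (l * sinh (l * x) * A x - l * cosh (l * x) * B x)
             + (cosh (l * x) * cosh (l * x) - sinh (l * x) * sinh (l * x)) * x powr a) (at x)"
      unfolding U_def by (rule derivative_eq_intros dA dB that refl | simp add: algebra_simps)+
    also have "cosh (l * x) * cosh (l * x) - sinh (l * x) * sinh (l * x) = 1"
      using cosh_square_eq[of "l * x"] by (simp add: power2_eq_square)
    finally show ?thesis by (simp add: V_def algebra_simps)
  qed
  have dV: "(V has_real_derivative l * U x) (at x)" if "x > 0" for x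
    unfolding U_def V_def by (auto intro!: derivative_eq_intros dA dB that simp: algebra_simps)
  have "smooth_upto k {0<..} (\<lambda>x. \<alpha> * U x + \<beta> * V x)"
  proof (induction k arbitrary: \<alpha> \<beta>)
    have deriv: "((\<lambda>x. \<alpha> * U x + \<beta> * V x) has_field_derivative
                   ((\<beta> * l) * U x + (\<alpha> * l) * V x) + \<alpha> * x powr a) (at x)"
      if "x \<in> {0<..}" for x \<alpha> \<beta>
      using that by (auto intro!: derivative_eq_intros dU dV simp: algebra_simps)
    case 0 show ?case by (rule smooth_upto_0I[OF deriv])
    case (Suc k) show ?case
      by (rule smooth_upto_SucI[OF _ deriv smooth_upto_add[OF _ Suc.IH smooth_upto_powr]]) simp_all
  qed
  then show ?thesis by (simp add: U_def V_def)
qed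

lemma integrable_on_continuous_mult_powr:
  fixes g :: "real \<Rightarrow> real"
  assumes "continuous_on {0..b} g" "-1 < a" "0 \<le> b"
  shows "(\<lambda>u. g u * u powr a) integrable_on {0..b}"
proof -
  have "(\<lambda>u. g u * u powr a) absolutely_integrable_on {0..b}"
  proof (rule absolutely_integrable_bounded_measurable_product_real)
    show "g \<in> borel_measurable (lebesgue_on {0..b})"
      by (rule continuous_imp_measurable_on_sets_lebesgue[OF assms(1)]) auto
    show "bounded (g ` {0..b})"
      using compact_continuous_image[OF assms(1)] compact_imp_bounded by auto
    show "(\<lambda>u. u powr a) absolutely_integrable_on {0..b}"
      by (rule nonnegative_absolutely_integrable_1[OF integrable_on_powr_from_0[OF assms(2,3)]]) auto
  qed auto
  then show ?thesis
    using set_lebesgue_integral_eq_integral(1) absolutely_integrable_on_def by blast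
qed

lemma has_real_derivative_integral_continuous_mult_powr:
  fixes g :: "real \<Rightarrow> real"
  assumes g: "continuous_on UNIV g" and a: "-1 < a" and t: "0 < t"
  shows "((\<lambda>\<tau>. integral {0..\<tau>} (\<lambda>u. g u * u powr a)) has_real_derivative g t * t powr a) (at t)"
proof -
  have "(\<lambda>u. g u * u powr a) integrable_on {0..2*t}"
    by (rule integrable_on_continuous_mult_powr) (use g a t in \<open>auto intro: continuous_on_subset\<close>)
  moreover have "isCont (\<lambda>u. g u * u powr a) t"
    using g t by (auto intro!: continuous_intros simp: continuous_on_eq_continuous_at)
  ultimately have "((\<lambda>\<tau>. integral {0..\<tau>} (\<lambda>u. g u * u powr a)) has_vector_derivative g t * t powr a)
                     (at t within ({0..2*t} - {}))"
    using t by (intro integral_has_vector_derivative_continuous_at)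
               (auto intro: continuous_at_imp_continuous_at_within)
  moreover have "at t within ({0..2*t} - {}) = at t"
    by (rule at_within_interior) (use t in auto)
  ultimately show ?thesis by (simp add: has_real_derivative_iff_has_vector_derivative)
qed

lemma R_Y_cosh_sinh_expansion:
  fixes H lam \<theta> \<tau> :: real
  assumes "0 < H" "0 \<le> \<tau>"
  shows "R_Y H lam \<theta> \<tau> = \<theta>\<^sup>2 * (Gamma (2*H + 1) / (2 * lam powr (2*H)) * cosh (lam * \<tau>)
     - H * (cosh (lam * \<tau>) * integral {0..\<tau>} (\<lambda>u. cosh (lam * u) * u powr (2*H - 1))
          - sinh (lam * \<tau>) * integral {0..\<tau>} (\<lambda>u. sinh (lam * u) * u powr (2*H - 1))))"
proof -
  have a: "-1 < 2*H - 1" using assms by simp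
  have "(\<lambda>u. cosh (lam * u) * u powr (2*H - 1)) integrable_on {0..\<tau>}"
       "(\<lambda>u. sinh (lam * u) * u powr (2*H - 1)) integrable_on {0..\<tau>}"
    by (intro integrable_on_continuous_mult_powr[OF _ a assms(2)] continuous_intros)+
  note integrable = integrable_on_mult_right[OF this(1)] integrable_on_mult_right[OF this(2)]
  have "integral {0..\<tau>} (\<lambda>u. cosh (lam * (\<tau> - u)) * u powr (2*H - 1))
      = integral {0..\<tau>} (\<lambda>u. cosh (lam * \<tau>) * (cosh (lam * u) * u powr (2*H - 1))
                              - sinh (lam * \<tau>) * (sinh (lam * u) * u powr (2*H - 1)))"
    by (rule integral_cong) (simp add: right_diff_distrib cosh_diff algebra_simps)
  also have "\<dots> = cosh (lam * \<tau>) * integral {0..\<tau>} (\<lambda>u. cosh (lam * u) * u powr (2*H - 1))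
                - sinh (lam * \<tau>) * integral {0..\<tau>} (\<lambda>u. sinh (lam * u) * u powr (2*H - 1))"
    by (simp add: integral_diff[OF integrable])
  finally show ?thesis unfolding R_Y_def by simp
qed

lemma smooth_on_R_Y:
  fixes H lam \<theta> :: real
  assumes "0 < H"
  shows "smooth_on {0<..} (R_Y H lam \<theta>)"
proof (rule smooth_onI_smooth_upto)
  fix k
  define A where "A \<tau> = integral {0..\<tau>} (\<lambda>u. cosh (lam * u) * u powr (2*H - 1))" for \<tau>
  define B where "B \<tau> = integral {0..\<tau>} (\<lambda>u. sinh (lam * u) * u powr (2*H - 1))" for \<tau>
  have a: "-1 < 2*H - 1" using assms by simp
  have dA: "(A has_real_derivative cosh (lam * x) * x powr (2*H - 1)) (at x)" if "0 < x" for x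
    unfolding A_def[abs_def]
    by (rule has_real_derivative_integral_continuous_mult_powr[OF _ a that]) (intro continuous_intros)
  have dB: "(B has_real_derivative sinh (lam * x) * x powr (2*H - 1)) (at x)" if "0 < x" for x
    unfolding B_def[abs_def]
    by (rule has_real_derivative_integral_continuous_mult_powr[OF _ a that]) (intro continuous_intros)
  have "smooth_upto k {0<..}
          (\<lambda>x. (\<theta>\<^sup>2 * Gamma (2*H + 1) / (2 * lam powr (2*H)) * cosh (lam * x) + 0 * sinh (lam * x))
             + ((- \<theta>\<^sup>2 * H) * (cosh (lam * x) * A x - sinh (lam * x) * B x)
                + 0 * (sinh (lam * x) * A x - cosh (lam * x) * B x)))"
    by (rule smooth_upto_add[OF _ smooth_upto_cosh_sinh smooth_upto_cosh_sinh_primitives[OF dA dB]])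
       simp_all
  then show "smooth_upto k {0<..} (R_Y H lam \<theta>)"
    by (rule smooth_upto_cong[OF open_greaterThan, rotated])
       (simp add: R_Y_cosh_sinh_expansion[OF assms] A_def B_def algebra_simps)
qed

lemma integral_cosh_shift_minus_one_bounds:
  fixes lam \<tau> a :: real
  assumes "0 \<le> lam" "0 \<le> \<tau>" "-1 < a"
  defines "J \<equiv> integral {0..\<tau>} (\<lambda>u. (cosh (lam * (\<tau> - u)) - 1) * u powr a)"
  shows "0 \<le> J" "J \<le> (cosh (lam * \<tau>) - 1) * \<tau> powr (a + 1) / (a + 1)"
proof -
  have integrable: "(\<lambda>u. (cosh (lam * (\<tau> - u)) - 1) * u powr a) integrable_on {0..\<tau>}"
    by (intro integrable_on_continuous_mult_powr assms continuous_intros)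
  show "0 \<le> J"
    unfolding J_def by (rule integral_nonneg[OF integrable]) (auto simp: cosh_real_ge_1)
  have powr: "((\<lambda>u. u powr a) has_integral \<tau> powr (a + 1) / (a + 1)) {0..\<tau>}"
    by (rule has_integral_powr_from_0[OF assms(3,2)])
  have "J \<le> integral {0..\<tau>} (\<lambda>u. (cosh (lam * \<tau>) - 1) * u powr a)"
    unfolding J_def
  proof (rule integral_le[OF integrable integrable_on_mult_right])
    show "(\<lambda>u. u powr a) integrable_on {0..\<tau>}" using powr by blast
    fix u assume "u \<in> {0..\<tau>}"
    then have "cosh (lam * (\<tau> - u)) \<le> cosh (lam * \<tau>)"
      using assms(1) by (subst cosh_real_nonneg_le_iff) (auto intro: mult_left_mono)
    then show "(cosh (lam * (\<tau> - u)) - 1) * u powr a \<le> (cosh (lam * \<tau>) - 1) * u powr a"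
      by (intro mult_right_mono) auto
  qed
  also have "\<dots> = (cosh (lam * \<tau>) - 1) * \<tau> powr (a + 1) / (a + 1)"
    using integral_unique[OF powr] by simp
  finally show "J \<le> (cosh (lam * \<tau>) - 1) * \<tau> powr (a + 1) / (a + 1)" .
qed

lemma R_Y_minus_R_Y_0:
  fixes H lam \<theta> \<tau> :: real
  assumes "0 < H" "0 \<le> \<tau>"
  shows "R_Y H lam \<theta> \<tau> - (R_Y H lam \<theta> 0 - \<theta>\<^sup>2 / 2 * \<tau> powr (2*H))
       = \<theta>\<^sup>2 * (Gamma (2*H + 1) / (2 * lam powr (2*H)) * (cosh (lam * \<tau>) - 1)
               - H * integral {0..\<tau>} (\<lambda>u. (cosh (lam * (\<tau> - u)) - 1) * u powr (2*H - 1)))"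
proof -
  have a: "-1 < 2*H - 1" using assms by simp
  have powr: "((\<lambda>u. u powr (2*H - 1)) has_integral \<tau> powr (2*H) / (2*H)) {0..\<tau>}"
    using has_integral_powr_from_0[OF a assms(2)] by simp
  define I where "I = integral {0..\<tau>} (\<lambda>u. cosh (lam * (\<tau> - u)) * u powr (2*H - 1))"
  have "(\<lambda>u. cosh (lam * (\<tau> - u)) * u powr (2*H - 1)) integrable_on {0..\<tau>}"
    by (intro integrable_on_continuous_mult_powr a assms continuous_intros)
  then have "integral {0..\<tau>} (\<lambda>u. (cosh (lam * (\<tau> - u)) - 1) * u powr (2*H - 1))
               = I - \<tau> powr (2*H) / (2*H)"
    unfolding I_def left_diff_distrib mult_1_left
    by (rule integral_diff[OF _ has_integral_integrable[OF powr], THEN trans])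
       (simp add: integral_unique[OF powr])
  then have HJ: "H * integral {0..\<tau>} (\<lambda>u. (cosh (lam * (\<tau> - u)) - 1) * u powr (2*H - 1))
                   = H * I - \<tau> powr (2*H) / 2"
    using assms(1) by (simp add: right_diff_distrib)
  have R: "R_Y H lam \<theta> \<tau> = \<theta>\<^sup>2 * (Gamma (2*H + 1) * cosh (lam * \<tau>) / (2 * lam powr (2*H)) - H * I)"
    unfolding R_Y_def I_def ..
  have R0: "R_Y H lam \<theta> 0 = \<theta>\<^sup>2 * (Gamma (2*H + 1) / (2 * lam powr (2*H)))"
    by (simp add: R_Y_def)
  show ?thesis
    unfolding HJ R R0 by (simp add: algebra_simps diff_divide_distrib)
qed

lemma R_Y_expansion_at_0:
  fixes H lam \<theta> :: real
  assumes "0 < H" "H < 1" "0 \<le> lam"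
  shows "(\<lambda>\<tau>. R_Y H lam \<theta> \<tau> - (R_Y H lam \<theta> 0 - \<theta>\<^sup>2 / 2 * \<tau> powr (2*H)))
           \<in> o[at_right 0](\<lambda>\<tau>. \<tau> powr (2*H))"
proof -
  define K where "K = Gamma (2*H + 1) / (2 * lam powr (2*H))"
  have "K \<ge> 0" unfolding K_def using assms by simp
  have bound: "\<bar>R_Y H lam \<theta> \<tau> - (R_Y H lam \<theta> 0 - \<theta>\<^sup>2 / 2 * \<tau> powr (2*H))\<bar>
                 \<le> \<theta>\<^sup>2 * (K + 1/2) * (cosh (lam * \<tau>) - 1)" if "0 < \<tau>" "\<tau> \<le> 1" for \<tau>
  proof -
    define c where "c = cosh (lam * \<tau>) - 1"
    define J where "J = integral {0..\<tau>} (\<lambda>u. (cosh (lam * (\<tau> - u)) - 1) * u powr (2*H - 1))"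
    have "c \<ge> 0" unfolding c_def using cosh_real_ge_1 by simp
    have J: "0 \<le> J" "J \<le> c * \<tau> powr (2*H) / (2*H)"
      using integral_cosh_shift_minus_one_bounds[of lam \<tau> "2*H - 1"] assms that
      unfolding J_def c_def by simp_all
    have "\<tau> powr (2*H) \<le> 1" using that assms by (intro powr_le1) auto
    then have "H * J \<le> c / 2"
      using J(2) \<open>c \<ge> 0\<close> assms(1) mult_left_le[of "\<tau> powr (2*H)" c] by (simp add: field_simps)
    moreover have "0 \<le> K * c" "0 \<le> H * J"
      using J(1) \<open>K \<ge> 0\<close> \<open>c \<ge> 0\<close> assms(1) by simp_all
    ultimately have "\<bar>K * c - H * J\<bar> \<le> (K + 1/2) * c"
      unfolding abs_le_iff distrib_right by linarith
    moreover have "R_Y H lam \<theta> \<tau> - (R_Y H lam \<theta> 0 - \<theta>\<^sup>2 / 2 * \<tau> powr (2*H)) = \<theta>\<^sup>2 * (K * c - H * J)"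
      using R_Y_minus_R_Y_0[OF assms(1) less_imp_le[OF that(1)]] unfolding K_def c_def J_def .
    ultimately show ?thesis
      unfolding c_def[symmetric] by (simp add: abs_mult mult.assoc mult_left_mono)
  qed
  have "(\<lambda>\<tau>. R_Y H lam \<theta> \<tau> - (R_Y H lam \<theta> 0 - \<theta>\<^sup>2 / 2 * \<tau> powr (2*H)))
          \<in> O[at_right 0](\<lambda>\<tau>. cosh (lam * \<tau>) - 1)"
  proof (rule bigoI, rule eventually_at_rightI)
    fix \<tau> :: real assume "\<tau> \<in> {0<..<1}"
    then show "norm (R_Y H lam \<theta> \<tau> - (R_Y H lam \<theta> 0 - \<theta>\<^sup>2 / 2 * \<tau> powr (2*H)))
                 \<le> \<theta>\<^sup>2 * (K + 1/2) * norm (cosh (lam * \<tau>) - 1)"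
      using bound[of \<tau>] cosh_real_ge_1[of "lam * \<tau>"] by simp
  qed simp
  also have "(\<lambda>\<tau>. cosh (lam * \<tau>) - 1) \<in> O[at_right 0](\<lambda>\<tau>. \<tau> ^ 2)"
    unfolding cosh_def scaleR_conv_of_real by real_asymp
  also have "(\<lambda>\<tau>. \<tau> ^ 2) \<in> o[at_right 0](\<lambda>\<tau>. \<tau> powr (2*H))"
    using assms(2) by real_asymp
  finally show ?thesis .
qed

theorem lemma2:
  fixes H lam \<theta> :: real
  assumes "0 < H" "H < 1/2" "0 < lam" "0 < \<theta>"
  shows "smooth_on {0<..} (R_Y H lam \<theta>)
    \<and> (\<lambda>\<tau>. R_Y H lam \<theta> \<tau> - (R_Y H lam \<theta> 0 - \<theta>\<^sup>2 / 2 * \<tau> powr (2*H)))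
        \<in> o[at_right 0](\<lambda>\<tau>. \<tau> powr (2*H))"
  using smooth_on_R_Y[OF assms(1)] R_Y_expansion_at_0[OF assms(1) _ less_imp_le[OF assms(3)]] assms(2)
  by simp

end
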